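(* Let $K\ge 2$, and let $\mathbf{z}_r$ and $\mathrm{OPT}\text{-}\mathbf{Q}^\star$ be as defined in the context. Let $\lambda_j^\star$ be the $j$-th eigenvalue of $\mathbf{Q}^\star$, with $\lambda_j^\star=0$ if $j>r^\star$, and define $\delta^\star=\min\{\min_{j\in[r-1]}|\lambda_j^\star-\lambda_{j+1}^\star|,\ \lambda_r^\star\}$. If $r\le r^\star$ and $\|\mathbf{H}\|_2\le\delta^\star/2$, then $$\left|\mathrm{OPT}\text{-}\mathbf{Q}^\star-\mathbf{z}_r^\dagger\mathbf{Q}^\star\mathbf{z}_r\right|\le O\!\left(n\left(\lambda_{r+1}^\star+\frac{\lambda_1^\star}{\delta^\star}\|\mathbf{H}\|_2\right)\right).$$
   Context: $\mathcal{A}_K=\{\exp(2\pi\mathrm{i}k/K):k=0,\dots,K-1\}$. $\mathbf{Q}^\star\in\mathbb{C}^{n\times n}$ is Hermitian positive semi-definite of rank $r^\star$, with eigendecomposition $\mathbf{Q}^\star=\sum_{i=1}^{r^\star}\lambda_i^\star\mathbf{u}_i^\star\mathbf{u}_i^{\star\dagger}$, $\lambda_1^\star\ge\lambda_2^\star\ge\dots$. $\mathbf{H}\in\mathbb{C}^{n\times n}$ is an arbitrary (not necessarily Hermitian) matrix and $\mathbf{Q}=\mathbf{Q}^\star+\mathbf{H}$. $\mathbf{Q}_r=\mathbf{V}_r\boldsymbol{\Sigma}_r\mathbf{V}_r^\dagger$, where $\boldsymbol{\Sigma}_r$ is the diagonal matrix of the top-$r$ singular values of $\mathbf{Q}$ and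 $\mathbf{V}_r$ the matrix of the corresponding top-$r$ left singular vectors. $\mathrm{OPT}\text{-}\mathbf{Q}^\star=\max_{\mathbf{z}\in\mathcal{A}_K^n}\mathbf{z}^\dagger\mathbf{Q}^\star\mathbf{z}$ and $\mathbf{z}_r$ attains $\max_{\mathbf{z}\in\mathcal{A}_K^n}\mathbf{z}^\dagger\mathbf{Q}_r\mathbf{z}$. $\|\cdot\|_2$ is the spectral norm; $O(\cdot)$ hides an absolute constant. *)

theory Defs
  imports "HOL-Analysis.Analysis"
begin

text \<open>Vectors in C^n are functions nat => complex (only indices < n matter);
n x n matrices are functions nat => nat => complex (only indices < n matter).\<close>

definition roots_of_unity :: "nat \<Rightarrow> complex set" where
  "roots_of_unity K = {cis (2 * pi * real k / real K) | k. k < K}"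

definition AKn :: "nat \<Rightarrow> nat \<Rightarrow> (nat \<Rightarrow> complex) set" where
  "AKn K n = {z. (\<forall>i<n. z i \<in> roots_of_unity K) \<and> (\<forall>i\<ge>n. z i = 0)}"

definition vnorm :: "nat \<Rightarrow> (nat \<Rightarrow> complex) \<Rightarrow> real" where
  "vnorm n x = sqrt (\<Sum>i<n. (cmod (x i))\<^sup>2)"

definition cinner :: "nat \<Rightarrow> (nat \<Rightarrow> complex) \<Rightarrow> (nat \<Rightarrow> complex) \<Rightarrow> complex" where
  "cinner n x y = (\<Sum>i<n. cnj (x i) * y i)"

definition mulv :: "nat \<Rightarrow> (nat \<Rightarrow> nat \<Rightarrow> complex) \<Rightarrow> (nat \<Rightarrow> complex) \<Rightarrow> (nat \<Rightarrow> complex)" where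
  "mulv n A x = (\<lambda>i. \<Sum>j<n. A i j * x j)"

definition spec_norm :: "nat \<Rightarrow> (nat \<Rightarrow> nat \<Rightarrow> complex) \<Rightarrow> real" where
  "spec_norm n A = Sup {vnorm n (mulv n A x) | x. vnorm n x = 1}"

definition qform :: "nat \<Rightarrow> (nat \<Rightarrow> nat \<Rightarrow> complex) \<Rightarrow> (nat \<Rightarrow> complex) \<Rightarrow> complex" where
  "qform n A z = (\<Sum>i<n. \<Sum>j<n. cnj (z i) * A i j * z j)"

definition orthonormal_on :: "nat \<Rightarrow> nat set \<Rightarrow> (nat \<Rightarrow> nat \<Rightarrow> complex) \<Rightarrow> bool" where
  "orthonormal_on n I u \<longleftrightarrow> (\<forall>k\<in>I. \<forall>l\<in>I. cinner n (u k) (u l) = (if k = l then 1 else 0))"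

definition is_svd :: "nat \<Rightarrow> (nat \<Rightarrow> nat \<Rightarrow> complex) \<Rightarrow> (nat \<Rightarrow> real) \<Rightarrow>
    (nat \<Rightarrow> nat \<Rightarrow> complex) \<Rightarrow> (nat \<Rightarrow> nat \<Rightarrow> complex) \<Rightarrow> bool" where
  "is_svd n Q \<sigma> v w \<longleftrightarrow>
     (\<forall>k\<in>{1..n}. \<sigma> k \<ge> 0) \<and> (\<forall>k\<in>{1..<n}. \<sigma> (k+1) \<le> \<sigma> k) \<and>
     orthonormal_on n {1..n} v \<and> orthonormal_on n {1..n} w \<and>
     (\<forall>i<n. \<forall>j<n. Q i j = (\<Sum>k=1..n. complex_of_real (\<sigma> k) * v k i * cnj (w k j)))"

definition trunc_mat :: "nat \<Rightarrow> (nat \<Rightarrow> real) \<Rightarrow> (nat \<Rightarrow> nat \<Rightarrow> complex) \<Rightarrow> nat \<Rightarrow> nat \<Rightarrow> complex" where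
  "trunc_mat r \<sigma> v = (\<lambda>i j. \<Sum>k=1..r. complex_of_real (\<sigma> k) * v k i * cnj (v k j))"

definition eig_mat :: "nat \<Rightarrow> (nat \<Rightarrow> real) \<Rightarrow> (nat \<Rightarrow> nat \<Rightarrow> complex) \<Rightarrow> nat \<Rightarrow> nat \<Rightarrow> complex" where
  "eig_mat rs lam u = (\<lambda>i j. \<Sum>k=1..rs. complex_of_real (lam k) * u k i * cnj (u k j))"

definition delta_star :: "(nat \<Rightarrow> real) \<Rightarrow> nat \<Rightarrow> real" where
  "delta_star lam r = Min ({\<bar>lam j - lam (j+1)\<bar> | j. j \<in> {1..<r}} \<union> {lam r})"

text \<open>OPT(A) = max over z in A_K^n of z^dagger A z (real for Hermitian A).\<close>
definition OPT :: "nat \<Rightarrow> nat \<Rightarrow> (nat \<Rightarrow> nat \<Rightarrow> complex) \<Rightarrow> real" where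
  "OPT K n A = Max ((\<lambda>z. Re (qform n A z)) ` AKn K n)"

end

theory Submission
  imports Defs
begin

text \<open>
  Write \<open>Q = Q\<^sup>\<star> + H = \<Sum>\<^sub>k \<sigma>\<^sub>k v\<^sub>k w\<^sub>k\<^sup>\<dagger>\<close>.  For every \<open>z\<close>, with \<open>a\<^sub>k = v\<^sub>k\<^sup>\<dagger> z\<close> and \<open>b\<^sub>k = w\<^sub>k\<^sup>\<dagger> z\<close>,
  \<open>z\<^sup>\<dagger> Q\<^sup>\<star> z - z\<^sup>\<dagger> Q\<^sub>r z = \<Sum>\<^sub>k\<^sub>\<le>\<^sub>r \<sigma>\<^sub>k a\<^sub>k\<^sup>* (w\<^sub>k - v\<^sub>k)\<^sup>\<dagger> z + \<Sum>\<^sub>k\<^sub>>\<^sub>r \<sigma>\<^sub>k a\<^sub>k\<^sup>* b\<^sub>k - z\<^sup>\<dagger> H z\<close>.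
  Weyl's inequalities give \<open>\<sigma>\<^sub>r\<^sub>+\<^sub>1 \<le> \<lambda>\<^sub>r\<^sub>+\<^sub>1 + \<parallel>H\<parallel>\<close> and \<open>\<sigma>\<^sub>r \<ge> \<lambda>\<^sub>r - \<parallel>H\<parallel> \<ge> \<delta>\<^sup>\<star>/2\<close>, so the
  tail is \<open>O(\<lambda>\<^sub>r\<^sub>+\<^sub>1 + \<parallel>H\<parallel>) \<parallel>z\<parallel>\<^sup>2\<close>.  The vectors \<open>w\<^sub>k - v\<^sub>k\<close> solve the Sylvester equation
  \<open>Q\<^sup>\<star> (w\<^sub>k - v\<^sub>k) + \<sigma>\<^sub>k (w\<^sub>k - v\<^sub>k) = H\<^sup>\<dagger> v\<^sub>k - H w\<^sub>k\<close> with \<open>Q\<^sup>\<star> \<succeq> 0\<close>, so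
  \<open>g \<mapsto> \<Sum>\<^sub>k g\<^sub>k (w\<^sub>k - v\<^sub>k)\<close> has norm at most \<open>2 \<parallel>H\<parallel> / \<sigma>\<^sub>r\<close>, and the head is
  \<open>O(\<lambda>\<^sub>1 \<parallel>H\<parallel> / \<delta>\<^sup>\<star>) \<parallel>z\<parallel>\<^sup>2\<close>.  On \<open>\<A>\<^sub>K\<^sup>n\<close> we have \<open>\<parallel>z\<parallel>\<^sup>2 = n\<close>, so the two quadratic forms
  differ uniformly by \<open>O(n (\<lambda>\<^sub>r\<^sub>+\<^sub>1 + \<lambda>\<^sub>1 \<parallel>H\<parallel> / \<delta>\<^sup>\<star>))\<close>, and a maximiser of one loses at most
  twice that for the other.
\<close>

definition lincomb :: "nat set \<Rightarrow> (nat \<Rightarrow> complex) \<Rightarrow> (nat \<Rightarrow> nat \<Rightarrow> complex) \<Rightarrow> nat \<Rightarrow> complex" where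
  "lincomb I c u = (\<lambda>i. \<Sum>k\<in>I. c k * u k i)"

definition mat_adjoint :: "(nat \<Rightarrow> nat \<Rightarrow> complex) \<Rightarrow> nat \<Rightarrow> nat \<Rightarrow> complex" where
  "mat_adjoint A = (\<lambda>i j. cnj (A j i))"

abbreviation coeff_norm :: "nat set \<Rightarrow> (nat \<Rightarrow> complex) \<Rightarrow> real" where
  "coeff_norm J g \<equiv> sqrt (\<Sum>k\<in>J. (cmod (g k))\<^sup>2)"

section \<open>Inner products and norms\<close>

lemma cinner_add_right: "cinner n x (\<lambda>i. y i + z i) = cinner n x y + cinner n x z"
  by (simp add: cinner_def distrib_left sum.distrib)

lemma cinner_diff_right: "cinner n x (\<lambda>i. y i - z i) = cinner n x y - cinner n x z"
  by (simp add: cinner_def right_diff_distrib sum_subtractf)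

lemma cinner_scale_right: "cinner n x (\<lambda>i. c * y i) = c * cinner n x y"
  by (simp add: cinner_def sum_distrib_left algebra_simps)

lemma cinner_add_left: "cinner n (\<lambda>i. y i + z i) x = cinner n y x + cinner n z x"
  by (simp add: cinner_def distrib_right sum.distrib)

lemma cinner_diff_left: "cinner n (\<lambda>i. y i - z i) x = cinner n y x - cinner n z x"
  by (simp add: cinner_def left_diff_distrib sum_subtractf)

lemma cinner_commute: "cnj (cinner n x y) = cinner n y x"
  by (simp add: cinner_def mult.commute)

lemma Re_cinner_commute: "Re (cinner n y x) = Re (cinner n x y)"
  by (metis cinner_commute complex_cnj_cnj cnj.sel(1))

lemma cinner_cong:
  "(\<And>i. i < n \<Longrightarrow> x i = x' i) \<Longrightarrow> (\<And>i. i < n \<Longrightarrow> y i = y' i) \<Longrightarrow> cinner n x y = cinner n x' y'"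
  by (simp add: cinner_def)

lemma vnorm_cong: "(\<And>i. i < n \<Longrightarrow> x i = x' i) \<Longrightarrow> vnorm n x = vnorm n x'"
  by (simp add: vnorm_def)

lemma vnorm_nonneg: "0 \<le> vnorm n x"
  by (simp add: vnorm_def sum_nonneg)

lemma power2_vnorm: "(vnorm n x)\<^sup>2 = (\<Sum>i<n. (cmod (x i))\<^sup>2)"
  by (simp add: vnorm_def sum_nonneg)

lemma vnorm_eq_0_iff: "vnorm n x = 0 \<longleftrightarrow> (\<forall>i<n. x i = 0)"
  by (auto simp: vnorm_def sum_nonneg sum_nonneg_eq_0_iff)

lemma cnj_mult_self: "cnj z * z = of_real ((cmod z)\<^sup>2)"
  by (metis complex_norm_square mult.commute of_real_power)

lemma cinner_self: "cinner n x x = of_real ((vnorm n x)\<^sup>2)"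
  by (simp add: cinner_def power2_vnorm cnj_mult_self del: of_real_power)

lemma Re_cinner_self: "Re (cinner n x x) = (vnorm n x)\<^sup>2"
  by (simp add: cinner_self)

lemma cmod_cinner_le: "cmod (cinner n x y) \<le> vnorm n x * vnorm n y"
proof -
  have "cmod (cinner n x y) \<le> (\<Sum>i<n. cmod (cnj (x i) * y i))"
    unfolding cinner_def by (rule norm_sum)
  also have "\<dots> = (\<Sum>i<n. \<bar>cmod (x i)\<bar> * \<bar>cmod (y i)\<bar>)"
    by (simp add: norm_mult)
  also have "\<dots> \<le> L2_set (\<lambda>i. cmod (x i)) {..<n} * L2_set (\<lambda>i. cmod (y i)) {..<n}"
    by (rule L2_set_mult_ineq)
  finally show ?thesis by (simp add: vnorm_def L2_set_def)
qed

lemma Re_cinner_le: "Re (cinner n x y) \<le> vnorm n x * vnorm n y"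
  using cmod_cinner_le complex_Re_le_cmod order_trans by blast

lemma power2_vnorm_add:
  "(vnorm n (\<lambda>i. x i + y i))\<^sup>2 = (vnorm n x)\<^sup>2 + 2 * Re (cinner n x y) + (vnorm n y)\<^sup>2"
  using Re_cinner_commute[of n y x]
  by (simp flip: Re_cinner_self add: cinner_add_left cinner_add_right)

lemma power2_vnorm_diff:
  "(vnorm n (\<lambda>i. x i - y i))\<^sup>2 = (vnorm n x)\<^sup>2 - 2 * Re (cinner n x y) + (vnorm n y)\<^sup>2"
  using Re_cinner_commute[of n y x]
  by (simp flip: Re_cinner_self add: cinner_diff_left cinner_diff_right)

lemma vnorm_scale: "vnorm n (\<lambda>i. c * x i) = cmod c * vnorm n x"
proof (rule power2_eq_imp_eq)
  show "(vnorm n (\<lambda>i. c * x i))\<^sup>2 = (cmod c * vnorm n x)\<^sup>2"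
    by (simp add: power2_vnorm norm_mult power_mult_distrib sum_distrib_left)
qed (simp_all add: vnorm_nonneg)

lemma power2_vnorm_add_scaled:
  "(vnorm n (\<lambda>i. x i + of_real t * y i))\<^sup>2 = (vnorm n x)\<^sup>2 + 2 * t * Re (cinner n x y) + t\<^sup>2 * (vnorm n y)\<^sup>2"
  by (simp add: power2_vnorm_add cinner_scale_right vnorm_scale power_mult_distrib)

lemma vnorm_triangle: "vnorm n (\<lambda>i. x i + y i) \<le> vnorm n x + vnorm n y"
proof (rule power2_le_imp_le)
  show "(vnorm n (\<lambda>i. x i + y i))\<^sup>2 \<le> (vnorm n x + vnorm n y)\<^sup>2"
    using Re_cinner_le[of n x y] by (simp add: power2_vnorm_add power2_sum)
qed (simp add: vnorm_nonneg add_nonneg_nonneg)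

lemma vnorm_triangle_diff: "vnorm n (\<lambda>i. x i - y i) \<le> vnorm n x + vnorm n y"
  using vnorm_triangle[of n x "\<lambda>i. - y i"] vnorm_scale[of n "-1" y] by simp

lemma vnorm_rev_triangle: "vnorm n x - vnorm n y \<le> vnorm n (\<lambda>i. x i + y i)"
  using vnorm_triangle_diff[of n "\<lambda>i. x i + y i" y] by simp

section \<open>Orthonormal families\<close>

lemma orthonormal_on_subset: "orthonormal_on n J u \<Longrightarrow> I \<subseteq> J \<Longrightarrow> orthonormal_on n I u"
  unfolding orthonormal_on_def by blast

lemma cinner_lincomb_right: "cinner n x (lincomb I c u) = (\<Sum>k\<in>I. c k * cinner n x (u k))"
  by (simp add: lincomb_def cinner_def sum_distrib_left sum.swap[of _ I] algebra_simps)

lemma cinner_lincomb_left: "cinner n (lincomb I c u) x = (\<Sum>k\<in>I. cnj (c k) * cinner n (u k) x)"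
  by (simp add: lincomb_def cinner_def sum_distrib_left sum_distrib_right sum.swap[of _ I] algebra_simps)

lemma cinner_orthonormal_lincomb:
  assumes "orthonormal_on n J u" "I \<subseteq> J" "finite I" "j \<in> J"
  shows "cinner n (u j) (lincomb I c u) = (if j \<in> I then c j else 0)"
proof -
  have "cinner n (u j) (lincomb I c u) = (\<Sum>k\<in>I. if k = j then c k else 0)"
    unfolding cinner_lincomb_right using assms by (intro sum.cong) (auto simp: orthonormal_on_def)
  then show ?thesis
    using assms(3) by (simp add: sum.delta')
qed

lemma power2_vnorm_lincomb:
  assumes "orthonormal_on n I u" "finite I"
  shows "(vnorm n (lincomb I c u))\<^sup>2 = (\<Sum>k\<in>I. (cmod (c k))\<^sup>2)"
proof -
  have "cinner n (lincomb I c u) (lincomb I c u) = (\<Sum>k\<in>I. cnj (c k) * c k)"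
    unfolding cinner_lincomb_left using assms by (intro sum.cong) (auto simp: cinner_orthonormal_lincomb)
  also have "\<dots> = of_real (\<Sum>k\<in>I. (cmod (c k))\<^sup>2)"
    by (simp add: cnj_mult_self del: of_real_power)
  finally have "of_real ((vnorm n (lincomb I c u))\<^sup>2) = (of_real (\<Sum>k\<in>I. (cmod (c k))\<^sup>2) :: complex)"
    by (simp only: cinner_self)
  then show ?thesis
    by (simp only: of_real_eq_iff)
qed

lemma vnorm_lincomb:
  assumes "orthonormal_on n I u" "finite I"
  shows "vnorm n (lincomb I c u) = coeff_norm I c"
proof -
  have "vnorm n (lincomb I c u) = sqrt ((vnorm n (lincomb I c u))\<^sup>2)"
    by (simp add: vnorm_nonneg)
  then show ?thesis
    by (simp only: power2_vnorm_lincomb[OF assms])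
qed

lemma bessel_inequality:
  assumes "orthonormal_on n I u" "finite I"
  shows "(\<Sum>k\<in>I. (cmod (cinner n (u k) x))\<^sup>2) \<le> (vnorm n x)\<^sup>2"
proof -
  define p where "p = lincomb I (\<lambda>k. cinner n (u k) x) u"
  have "cinner n p x = (\<Sum>k\<in>I. cnj (cinner n (u k) x) * cinner n (u k) x)"
    by (simp add: p_def cinner_lincomb_left)
  then have "Re (cinner n x p) = (\<Sum>k\<in>I. (cmod (cinner n (u k) x))\<^sup>2)"
    by (simp add: Re_cinner_commute[of n x p] cnj_mult_self del: of_real_power)
  moreover have "(vnorm n p)\<^sup>2 = (\<Sum>k\<in>I. (cmod (cinner n (u k) x))\<^sup>2)"
    unfolding p_def by (rule power2_vnorm_lincomb[OF assms])
  moreover have "0 \<le> (vnorm n (\<lambda>i. x i - p i))\<^sup>2"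
    by simp
  ultimately show ?thesis
    unfolding power2_vnorm_diff by linarith
qed

section \<open>Matrices, singular value decompositions and the spectral norm\<close>

lemma mulv_cong: "(\<And>j. j < n \<Longrightarrow> x j = x' j) \<Longrightarrow> mulv n A x = mulv n A x'"
  by (simp add: mulv_def)

lemma mulv_add_mat: "mulv n (\<lambda>i j. A i j + B i j) x = (\<lambda>i. mulv n A x i + mulv n B x i)"
  by (simp add: mulv_def distrib_right sum.distrib)

lemma mulv_diff: "mulv n A (\<lambda>i. x i - y i) = (\<lambda>i. mulv n A x i - mulv n A y i)"
  by (simp add: mulv_def right_diff_distrib sum_subtractf)

lemma mulv_scale: "mulv n A (\<lambda>i. c * x i) = (\<lambda>i. c * mulv n A x i)"
  by (simp add: mulv_def sum_distrib_left algebra_simps)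

lemma mulv_lincomb: "mulv n A (lincomb I c u) = lincomb I c (\<lambda>k. mulv n A (u k))"
  by (simp add: mulv_def lincomb_def sum_distrib_left sum.swap[of _ I] algebra_simps)

lemma cinner_mulv_adjoint: "cinner n x (mulv n A y) = cinner n (mulv n (mat_adjoint A) x) y"
proof -
  have "cinner n x (mulv n A y) = (\<Sum>i<n. \<Sum>j<n. cnj (x i) * A i j * y j)"
    by (simp add: cinner_def mulv_def sum_distrib_left mult.assoc)
  also have "\<dots> = (\<Sum>j<n. \<Sum>i<n. cnj (x i) * A i j * y j)"
    by (rule sum.swap)
  also have "\<dots> = cinner n (mulv n (mat_adjoint A) x) y"
    by (simp add: cinner_def mulv_def mat_adjoint_def sum_distrib_right sum_distrib_left
        mult.commute mult.left_commute)
  finally show ?thesis .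
qed

lemma qform_eq_cinner: "qform n A z = cinner n z (mulv n A z)"
  by (simp add: qform_def cinner_def mulv_def sum_distrib_left algebra_simps)

lemma mulv_outer_sum:
  "mulv n (\<lambda>i j. \<Sum>k\<in>I. c k * a k i * cnj (b k j)) x = lincomb I (\<lambda>k. c k * cinner n (b k) x) a"
  by (simp add: mulv_def lincomb_def cinner_def sum_distrib_left sum_distrib_right sum.swap[of _ I]
      mult.commute mult.left_commute)

lemma mulv_eig_mat:
  "mulv n (eig_mat rs lam u) x = lincomb {1..rs} (\<lambda>k. of_real (lam k) * cinner n (u k) x) u"
  unfolding eig_mat_def by (rule mulv_outer_sum)

lemma mat_adjoint_eig_mat: "mat_adjoint (eig_mat rs lam u) = eig_mat rs lam u"
  by (simp add: mat_adjoint_def eig_mat_def fun_eq_iff mult.commute mult.left_commute)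

lemma trunc_mat_eq_eig_mat: "trunc_mat = eig_mat"
  by (simp add: fun_eq_iff trunc_mat_def eig_mat_def)

lemma is_svd_adjoint: "is_svd n A \<sigma> v w \<Longrightarrow> is_svd n (mat_adjoint A) \<sigma> w v"
  by (simp add: is_svd_def mat_adjoint_def mult.commute mult.left_commute)

lemma mulv_svd:
  assumes "is_svd n A \<sigma> v w" "i < n"
  shows "mulv n A x i = lincomb {1..n} (\<lambda>k. of_real (\<sigma> k) * cinner n (w k) x) v i"
proof -
  have "mulv n A x i = mulv n (\<lambda>i j. \<Sum>k\<in>{1..n}. of_real (\<sigma> k) * v k i * cnj (w k j)) x i"
    using assms by (simp add: mulv_def is_svd_def)
  then show ?thesis
    by (simp only: mulv_outer_sum)
qed

lemma mulv_svd_right_vector: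
  assumes svd: "is_svd n A \<sigma> v w" and k: "k \<in> {1..n}" and i: "i < n"
  shows "mulv n A (w k) i = of_real (\<sigma> k) * v k i"
proof -
  have "orthonormal_on n {1..n} w"
    using svd by (simp add: is_svd_def)
  then have "mulv n A (w k) i = (\<Sum>l\<in>{1..n}. if l = k then of_real (\<sigma> k) * v k i else 0)"
    unfolding mulv_svd[OF svd i] lincomb_def using k by (intro sum.cong) (auto simp: orthonormal_on_def)
  then show ?thesis
    using k by simp
qed

lemma vnorm_mulv_svd:
  "is_svd n A \<sigma> v w \<Longrightarrow> vnorm n (mulv n A x) = vnorm n (lincomb {1..n} (\<lambda>k. of_real (\<sigma> k) * cinner n (w k) x) v)"
  by (intro vnorm_cong mulv_svd)

lemma cinner_mulv_svd:
  "is_svd n A \<sigma> v w \<Longrightarrow> cinner n z (mulv n A x) = cinner n z (lincomb {1..n} (\<lambda>k. of_real (\<sigma> k) * cinner n (w k) x) v)"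
  by (intro cinner_cong refl mulv_svd)

lemma vnorm_weighted_lincomb_le:
  assumes a: "orthonormal_on n I a" and b: "orthonormal_on n I b" and I: "finite I" and m: "0 \<le> m"
    and s: "\<And>j. j \<in> I \<Longrightarrow> cinner n (a j) x \<noteq> 0 \<Longrightarrow> cmod (s j) \<le> m"
  shows "vnorm n (lincomb I (\<lambda>j. s j * cinner n (a j) x) b) \<le> m * vnorm n x"
proof (rule power2_le_imp_le)
  have "(vnorm n (lincomb I (\<lambda>j. s j * cinner n (a j) x) b))\<^sup>2
      = (\<Sum>j\<in>I. (cmod (s j))\<^sup>2 * (cmod (cinner n (a j) x))\<^sup>2)"
    by (simp add: power2_vnorm_lincomb[OF b I] norm_mult power_mult_distrib)
  also have "\<dots> \<le> (\<Sum>j\<in>I. m\<^sup>2 * (cmod (cinner n (a j) x))\<^sup>2)"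
  proof (rule sum_mono)
    fix j assume "j \<in> I"
    then show "(cmod (s j))\<^sup>2 * (cmod (cinner n (a j) x))\<^sup>2 \<le> m\<^sup>2 * (cmod (cinner n (a j) x))\<^sup>2"
      using s[of j] by (cases "cinner n (a j) x = 0") (auto intro: mult_right_mono power_mono)
  qed
  also have "\<dots> \<le> m\<^sup>2 * (vnorm n x)\<^sup>2"
    by (simp add: bessel_inequality[OF a I] mult_left_mono flip: sum_distrib_left)
  finally show "(vnorm n (lincomb I (\<lambda>j. s j * cinner n (a j) x) b))\<^sup>2 \<le> (m * vnorm n x)\<^sup>2"
    by (simp add: power_mult_distrib)
qed (simp add: m vnorm_nonneg)

lemma vnorm_weighted_lincomb_ge:
  assumes a: "orthonormal_on n I a" and b: "orthonormal_on n I b" and I: "finite I" "K \<subseteq> I"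
    and m: "0 \<le> m" and s: "\<And>j. j \<in> K \<Longrightarrow> m \<le> cmod (s j)"
  shows "m * vnorm n (lincomb K c a) \<le> vnorm n (lincomb I (\<lambda>j. s j * cinner n (a j) (lincomb K c a)) b)"
proof (rule power2_le_imp_le)
  have K: "finite K"
    using I finite_subset by blast
  have "(m * vnorm n (lincomb K c a))\<^sup>2 = (\<Sum>j\<in>K. m\<^sup>2 * (cmod (c j))\<^sup>2)"
    by (simp add: power_mult_distrib power2_vnorm_lincomb[OF orthonormal_on_subset[OF a I(2)] K]
        sum_distrib_left)
  also have "\<dots> \<le> (\<Sum>j\<in>K. (cmod (s j))\<^sup>2 * (cmod (c j))\<^sup>2)"
    using m s by (intro sum_mono mult_right_mono power_mono) auto
  also have "\<dots> = (\<Sum>j\<in>K. (cmod (s j * cinner n (a j) (lincomb K c a)))\<^sup>2)"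
  proof (rule sum.cong)
    fix j assume "j \<in> K"
    then have "cinner n (a j) (lincomb K c a) = c j"
      using I by (subst cinner_orthonormal_lincomb[OF a _ K]) auto
    then show "(cmod (s j))\<^sup>2 * (cmod (c j))\<^sup>2 = (cmod (s j * cinner n (a j) (lincomb K c a)))\<^sup>2"
      by (simp add: norm_mult power_mult_distrib)
  qed simp
  also have "\<dots> \<le> (\<Sum>j\<in>I. (cmod (s j * cinner n (a j) (lincomb K c a)))\<^sup>2)"
    using I by (intro sum_mono2) auto
  also have "\<dots> = (vnorm n (lincomb I (\<lambda>j. s j * cinner n (a j) (lincomb K c a)) b))\<^sup>2"
    by (rule power2_vnorm_lincomb[OF b I(1), symmetric])
  finally show "(m * vnorm n (lincomb K c a))\<^sup>2
      \<le> (vnorm n (lincomb I (\<lambda>j. s j * cinner n (a j) (lincomb K c a)) b))\<^sup>2" .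
qed (rule vnorm_nonneg)

lemma vnorm_mulv_le_frobenius:
  "vnorm n (mulv n A x) \<le> sqrt (\<Sum>i<n. (vnorm n (\<lambda>j. cnj (A i j)))\<^sup>2) * vnorm n x"
proof (rule power2_le_imp_le)
  have "(vnorm n (mulv n A x))\<^sup>2 = (\<Sum>i<n. (cmod (cinner n (\<lambda>j. cnj (A i j)) x))\<^sup>2)"
    by (simp add: power2_vnorm mulv_def cinner_def)
  also have "\<dots> \<le> (\<Sum>i<n. (vnorm n (\<lambda>j. cnj (A i j)) * vnorm n x)\<^sup>2)"
    by (intro sum_mono power_mono cmod_cinner_le) simp
  also have "\<dots> = (sqrt (\<Sum>i<n. (vnorm n (\<lambda>j. cnj (A i j)))\<^sup>2) * vnorm n x)\<^sup>2"
    by (simp add: power_mult_distrib sum_distrib_right sum_nonneg)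
  finally show "(vnorm n (mulv n A x))\<^sup>2 \<le> (sqrt (\<Sum>i<n. (vnorm n (\<lambda>j. cnj (A i j)))\<^sup>2) * vnorm n x)\<^sup>2" .
qed (simp add: vnorm_nonneg sum_nonneg)

lemma bdd_above_spec_norm: "bdd_above {vnorm n (mulv n A x) | x. vnorm n x = 1}"
proof (rule bdd_aboveI)
  fix y assume "y \<in> {vnorm n (mulv n A x) | x. vnorm n x = 1}"
  then obtain x where "y = vnorm n (mulv n A x)" "vnorm n x = 1"
    by blast
  then show "y \<le> sqrt (\<Sum>i<n. (vnorm n (\<lambda>j. cnj (A i j)))\<^sup>2)"
    using vnorm_mulv_le_frobenius[of n A x] by simp
qed

lemma vnorm_mulv_le: "vnorm n (mulv n A x) \<le> spec_norm n A * vnorm n x"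
proof (cases "vnorm n x = 0")
  case True
  then have "mulv n A x = mulv n A (\<lambda>_. 0)"
    by (intro mulv_cong) (simp add: vnorm_eq_0_iff)
  then show ?thesis
    using True by (simp add: mulv_def vnorm_def)
next
  case False
  then have pos: "0 < vnorm n x"
    using vnorm_nonneg[of n x] by simp
  define y where "y = (\<lambda>i. of_real (1 / vnorm n x) * x i)"
  have "vnorm n y = cmod (of_real (1 / vnorm n x)) * vnorm n x"
    unfolding y_def by (rule vnorm_scale)
  then have "vnorm n y = 1"
    using pos by (simp add: norm_divide)
  then have "vnorm n (mulv n A y) \<le> spec_norm n A"
    unfolding spec_norm_def by (intro cSup_upper bdd_above_spec_norm) blast
  moreover have "vnorm n (mulv n A y) = vnorm n (mulv n A x) / vnorm n x"
    using pos unfolding y_def mulv_scale vnorm_scale by (simp add: norm_divide)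
  ultimately show ?thesis
    using pos by (simp add: divide_le_eq mult.commute)
qed

lemma spec_norm_nonneg:
  assumes "0 < n"
  shows "0 \<le> spec_norm n A"
proof -
  define e where "e = (\<lambda>i::nat. if i = 0 then (1::complex) else 0)"
  have "\<And>i. (cmod (e i))\<^sup>2 = (if i = 0 then 1 else 0)"
    by (simp add: e_def)
  then have "(vnorm n e)\<^sup>2 = 1"
    using assms by (simp add: power2_vnorm sum.delta')
  then have "vnorm n e = 1"
    using vnorm_nonneg[of n e] by (simp add: power2_eq_1_iff)
  then have "vnorm n (mulv n A e) \<le> spec_norm n A"
    unfolding spec_norm_def by (intro cSup_upper bdd_above_spec_norm) blast
  then show ?thesis
    using vnorm_nonneg[of n "mulv n A e"] by linarith
qed

lemma vnorm_mulv_adjoint_le: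
  assumes "0 < n"
  shows "vnorm n (mulv n (mat_adjoint A) x) \<le> spec_norm n A * vnorm n x"
proof -
  define y where "y = mulv n (mat_adjoint A) x"
  have "(vnorm n y)\<^sup>2 = Re (cinner n (mulv n A y) x)"
    by (simp add: y_def Re_cinner_commute flip: Re_cinner_self cinner_mulv_adjoint)
  also have "\<dots> \<le> spec_norm n A * vnorm n y * vnorm n x"
    using Re_cinner_le[of n "mulv n A y" x] vnorm_mulv_le[of n A y]
    by (meson mult_right_mono order_trans vnorm_nonneg)
  finally have "vnorm n y * vnorm n y \<le> vnorm n y * (spec_norm n A * vnorm n x)"
    by (simp add: power2_eq_square algebra_simps)
  then show ?thesis
    using spec_norm_nonneg[OF assms, of A] vnorm_nonneg[of n x] vnorm_nonneg[of n y]
    unfolding y_def[symmetric] by (cases "vnorm n y = 0") auto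
qed

section \<open>Test vectors and a Sylvester-equation bound\<close>

lemma homogeneous_system_nontrivial:
  fixes a :: "nat \<Rightarrow> nat \<Rightarrow> complex"
  assumes "finite R" "finite J" "card R < card J"
  shows "\<exists>c. (\<exists>j\<in>J. c j \<noteq> 0) \<and> (\<forall>i\<in>R. (\<Sum>j\<in>J. a i j * c j) = 0)"
  using assms
proof (induction R arbitrary: J a rule: finite_induct)
  case empty
  then obtain j0 where "j0 \<in> J" by fastforce
  then show ?case by (intro exI[of _ "\<lambda>j. if j = j0 then 1 else 0"]) auto
next
  case (insert i0 R)
  show ?case
  proof (cases "\<forall>j\<in>J. a i0 j = 0")
    case True
    have "card R < card J" using insert by simp
    then obtain c where c: "\<exists>j\<in>J. c j \<noteq> 0" "\<forall>i\<in>R. (\<Sum>j\<in>J. a i j * c j) = 0"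
      using insert.IH[OF insert.prems(1)] by blast
    then show ?thesis using True by (intro exI[of _ c]) auto
  next
    case False
    then obtain j0 where j0: "j0 \<in> J" "a i0 j0 \<noteq> 0" by blast
    define J' where "J' = J - {j0}"
    have fJ': "finite J'" using insert by (simp add: J'_def)
    have cJ': "card R < card J'" using insert j0 by (simp add: J'_def)
    \<comment> \<open>Eliminate the unknown \<open>j0\<close> with equation \<open>i0\<close>, then recover \<open>c j0\<close> from it.\<close>
    define a' where "a' = (\<lambda>i j. a i j - a i j0 * a i0 j / a i0 j0)"
    obtain c' where c': "\<exists>j\<in>J'. c' j \<noteq> 0" "\<forall>i\<in>R. (\<Sum>j\<in>J'. a' i j * c' j) = 0"
      using insert.IH[OF fJ' cJ'] by blast
    define S where "S = (\<lambda>i. \<Sum>j\<in>J'. a i j * c' j)"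
    define c where "c = c'(j0 := - S i0 / a i0 j0)"
    have sumc: "(\<Sum>j\<in>J. a i j * c j) = a i j0 * c j0 + S i" for i
    proof -
      have "(\<Sum>j\<in>J. a i j * c j) = a i j0 * c j0 + (\<Sum>j\<in>J'. a i j * c j)"
        unfolding J'_def using j0 insert by (simp add: sum.remove)
      also have "(\<Sum>j\<in>J'. a i j * c j) = S i"
        unfolding S_def c_def J'_def by (intro sum.cong) auto
      finally show ?thesis .
    qed
    have "\<forall>i\<in>insert i0 R. (\<Sum>j\<in>J. a i j * c j) = 0"
    proof
      fix i assume "i \<in> insert i0 R"
      then consider "i = i0" | "i \<in> R" by blast
      then show "(\<Sum>j\<in>J. a i j * c j) = 0"
      proof cases
        case 1 then show ?thesis unfolding sumc using j0 by (simp add: c_def)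
      next
        case 2
        have "0 = (\<Sum>j\<in>J'. a' i j * c' j)" using c' 2 by simp
        also have "\<dots> = S i - a i j0 / a i0 j0 * S i0"
          by (simp add: a'_def S_def left_diff_distrib sum_subtractf sum_distrib_left algebra_simps)
        finally show ?thesis unfolding sumc using j0 by (simp add: c_def algebra_simps)
      qed
    qed
    moreover have "\<exists>j\<in>J. c j \<noteq> 0"
      using c' by (auto simp: c_def J'_def)
    ultimately show ?thesis by blast
  qed
qed


lemma orthogonal_lincomb_exists:
  assumes a: "orthonormal_on n {1..k} a" and k: "1 \<le> k"
  obtains c where "0 < vnorm n (lincomb {1..k} c a)"
    and "\<And>i. i \<in> {1..<k} \<Longrightarrow> cinner n (b i) (lincomb {1..k} c a) = 0"
proof -
  have "card {1..<k} < card {1..k}"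
    using k by simp
  then obtain c where c: "\<exists>j\<in>{1..k}. c j \<noteq> 0"
    and eqs: "\<forall>i\<in>{1..<k}. (\<Sum>j\<in>{1..k}. cinner n (b i) (a j) * c j) = 0"
    using homogeneous_system_nontrivial[of "{1..<k}" "{1..k}" "\<lambda>i j. cinner n (b i) (a j)"] by auto
  obtain j where j: "j \<in> {1..k}" "c j \<noteq> 0"
    using c by blast
  have "0 < (cmod (c j))\<^sup>2"
    using j by simp
  also have "\<dots> \<le> (\<Sum>l\<in>{1..k}. (cmod (c l))\<^sup>2)"
    using j by (intro member_le_sum) auto
  also have "\<dots> = (vnorm n (lincomb {1..k} c a))\<^sup>2"
    by (rule power2_vnorm_lincomb[OF a, symmetric]) simp
  finally have "0 < vnorm n (lincomb {1..k} c a)"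
    using vnorm_nonneg[of n "lincomb {1..k} c a"] by (auto simp: zero_less_power2 order_less_le)
  moreover have "cinner n (b i) (lincomb {1..k} c a) = 0" if "i \<in> {1..<k}" for i
    using eqs that by (simp add: cinner_lincomb_right mult.commute)
  ultimately show ?thesis
    using that by blast
qed

definition unit_coeffs :: "nat set \<Rightarrow> (nat \<Rightarrow> complex) set" where
  "unit_coeffs J = {g. (\<forall>k. k \<notin> J \<longrightarrow> g k = 0) \<and> (\<Sum>k\<in>J. (cmod (g k))\<^sup>2) = 1}"

lemma compact_unit_coeffs:
  assumes "finite J"
  shows "compact (unit_coeffs J)"
proof -
  let ?S = "\<lambda>k. if k \<in> J then cball (0::complex) 1 else {0}"
  have "compactin (product_topology (\<lambda>_. euclidean) UNIV) (Pi\<^sub>E UNIV ?S)"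
    by (subst compactin_PiE) auto
  then have box: "compact (Pi\<^sub>E UNIV ?S)"
    by (simp add: euclidean_product_topology)
  have eq: "unit_coeffs J = (\<Inter>k\<in>-J. {g. g k = 0}) \<inter> {g. (\<Sum>k\<in>J. (cmod (g k))\<^sup>2) = 1}"
    by (auto simp: unit_coeffs_def)
  have "closed {g::nat \<Rightarrow> complex. g k = 0}" for k
    by (intro closed_Collect_eq continuous_on_const continuous_on_product_coordinates)
  moreover have "closed {g::nat \<Rightarrow> complex. (\<Sum>k\<in>J. (cmod (g k))\<^sup>2) = 1}"
    by (intro closed_Collect_eq continuous_intros continuous_on_product_coordinates)
  ultimately have closed: "closed (unit_coeffs J)"
    unfolding eq by auto
  have "cmod (g k) \<le> 1" if "g \<in> unit_coeffs J" "k \<in> J" for g k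
  proof (rule power2_le_imp_le)
    have "(cmod (g k))\<^sup>2 \<le> (\<Sum>k\<in>J. (cmod (g k))\<^sup>2)"
      using that assms by (intro member_le_sum) auto
    then show "(cmod (g k))\<^sup>2 \<le> 1\<^sup>2"
      using that by (simp add: unit_coeffs_def)
  qed simp
  then have "unit_coeffs J \<subseteq> Pi\<^sub>E UNIV ?S"
    by (auto simp: PiE_def unit_coeffs_def)
  then show ?thesis
    using compact_Int_closed[OF box closed] by (simp add: Int_absorb1)
qed

lemma lincomb_norm_attains_max:
  assumes J: "finite J" "J \<noteq> {}"
  obtains y where "(\<Sum>k\<in>J. (cmod (y k))\<^sup>2) = 1"
    and "\<And>g. vnorm n (lincomb J g d) \<le> vnorm n (lincomb J y d) * coeff_norm J g"
proof -
  obtain k0 where "k0 \<in> J"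
    using J by blast
  moreover have "(cmod (if k = k0 then 1 else 0 :: complex))\<^sup>2 = (if k = k0 then 1 else 0)" for k
    by simp
  ultimately have "(\<lambda>k. if k = k0 then 1 else 0) \<in> unit_coeffs J"
    using J by (simp add: unit_coeffs_def sum.delta')
  moreover have "continuous_on (unit_coeffs J) (\<lambda>g. vnorm n (lincomb J g d))"
    unfolding vnorm_def lincomb_def
    by (intro continuous_intros continuous_on_subset[OF continuous_on_product_coordinates]) auto
  ultimately obtain y where y: "y \<in> unit_coeffs J"
    and ymax: "\<And>g. g \<in> unit_coeffs J \<Longrightarrow> vnorm n (lincomb J g d) \<le> vnorm n (lincomb J y d)"
    using continuous_attains_sup[OF compact_unit_coeffs[OF J(1)]] by blast
  have "vnorm n (lincomb J g d) \<le> vnorm n (lincomb J y d) * coeff_norm J g" for g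
  proof (cases "coeff_norm J g = 0")
    case True
    then have "lincomb J g d = (\<lambda>i. 0)"
      using J(1) by (simp add: sum_nonneg sum_nonneg_eq_0_iff lincomb_def)
    then show ?thesis
      by (simp add: vnorm_def sum_nonneg)
  next
    case False
    define \<nu> where "\<nu> = coeff_norm J g"
    have \<nu>: "0 < \<nu>"
      using False by (simp add: \<nu>_def sum_nonneg order_less_le)
    define g' where "g' = (\<lambda>k. if k \<in> J then g k / of_real \<nu> else 0)"
    have "(\<Sum>k\<in>J. (cmod (g' k))\<^sup>2) = (\<Sum>k\<in>J. (cmod (g k))\<^sup>2) / \<nu>\<^sup>2"
      by (simp add: g'_def norm_divide power_divide sum_divide_distrib)
    also have "\<dots> = 1"
      using \<nu> by (simp add: \<nu>_def sum_nonneg)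
    finally have "vnorm n (lincomb J g' d) \<le> vnorm n (lincomb J y d)"
      by (intro ymax) (simp add: unit_coeffs_def g'_def)
    moreover have "vnorm n (lincomb J g' d) = cmod (of_real (1 / \<nu>)) * vnorm n (lincomb J g d)"
      unfolding vnorm_scale[symmetric]
      by (rule arg_cong[where f = "vnorm n"]) (simp add: lincomb_def g'_def sum_distrib_left)
    ultimately show ?thesis
      using \<nu> by (simp add: \<nu>_def norm_divide divide_le_eq mult.commute)
  qed
  moreover have "(\<Sum>k\<in>J. (cmod (y k))\<^sup>2) = 1"
    using y by (simp add: unit_coeffs_def)
  ultimately show ?thesis
    using that by blast
qed

lemma linear_le_quadratic_imp_zero:
  fixes a b :: real
  assumes "\<And>t. 2 * t * a \<le> t\<^sup>2 * b"
  shows "a = 0"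
proof -
  define b' where "b' = \<bar>b\<bar> + 1"
  have b': "0 < b'"
    by (simp add: b'_def)
  have "2 * (a / b') * a \<le> (a / b')\<^sup>2 * b"
    by (rule assms)
  also have "\<dots> \<le> (a / b')\<^sup>2 * b'"
    by (intro mult_left_mono) (auto simp: b'_def)
  finally have "2 * a\<^sup>2 / b' \<le> a\<^sup>2 / b'"
    using b' by (simp add: power2_eq_square field_simps)
  then have "a\<^sup>2 \<le> 0"
    using b' by (simp add: divide_le_cancel)
  then show ?thesis
    by simp
qed

lemma power2_cmod_add_scaled:
  "(cmod (a + of_real t * b))\<^sup>2 = (cmod a)\<^sup>2 + 2 * t * Re (cnj a * b) + t\<^sup>2 * (cmod b)\<^sup>2"
  by (simp only: cmod_power2) (simp add: power2_eq_square algebra_simps)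

text \<open>Perturb the maximiser \<open>y\<close> along the real line \<open>y + t e\<close> and compare first-order terms.\<close>

lemma lincomb_norm_max_stationary:
  assumes max: "\<And>g. vnorm n (lincomb J g d) \<le> s * coeff_norm J g"
    and y: "(\<Sum>k\<in>J. (cmod (y k))\<^sup>2) = 1" "vnorm n (lincomb J y d) = s"
  shows "Re (cinner n (lincomb J y d) (lincomb J e d)) = s\<^sup>2 * Re (\<Sum>k\<in>J. cnj (y k) * e k)"
proof -
  define A where "A = Re (cinner n (lincomb J y d) (lincomb J e d))"
  define P where "P = (\<Sum>k\<in>J. Re (cnj (y k) * e k))"
  have s: "0 \<le> s"
    using y(2) vnorm_nonneg by metis
  have "2 * t * (A - s\<^sup>2 * P) \<le> t\<^sup>2 * (s\<^sup>2 * (\<Sum>k\<in>J. (cmod (e k))\<^sup>2) - (vnorm n (lincomb J e d))\<^sup>2)" for t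
  proof -
    define g where "g = (\<lambda>k. y k + of_real t * e k)"
    have "lincomb J g d = (\<lambda>i. lincomb J y d i + of_real t * lincomb J e d i)"
      by (simp add: g_def lincomb_def distrib_right sum.distrib sum_distrib_left algebra_simps)
    then have "s\<^sup>2 + 2 * t * A + t\<^sup>2 * (vnorm n (lincomb J e d))\<^sup>2 = (vnorm n (lincomb J g d))\<^sup>2"
      by (simp add: power2_vnorm_add_scaled A_def y(2))
    also have "\<dots> \<le> (s * coeff_norm J g)\<^sup>2"
      using max[of g] by (intro power_mono vnorm_nonneg)
    also have "\<dots> = s\<^sup>2 * (\<Sum>k\<in>J. (cmod (g k))\<^sup>2)"
      by (simp add: power_mult_distrib sum_nonneg)
    also have "(\<Sum>k\<in>J. (cmod (g k))\<^sup>2) = 1 + 2 * t * P + t\<^sup>2 * (\<Sum>k\<in>J. (cmod (e k))\<^sup>2)"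
      by (simp only: g_def power2_cmod_add_scaled sum.distrib y(1) P_def flip: sum_distrib_left)
    finally show ?thesis
      by (simp add: algebra_simps)
  qed
  then show ?thesis
    using linear_le_quadratic_imp_zero by (force simp: A_def P_def Re_sum)
qed

text \<open>In matrix form \<open>M D + D diag(\<sigma>) = F\<close> with \<open>M \<succeq> 0\<close>.  Pairing \<open>F y\<close> with \<open>D y\<close> for a top right
  singular vector \<open>y\<close> of \<open>D\<close> gives \<open>\<parallel>D\<parallel>\<^sup>2 \<sigma>\<^sub>0 \<le> Re \<langle>D y, F y\<rangle> \<le> \<parallel>D\<parallel> \<parallel>F\<parallel>\<close>.\<close>

lemma sylvester_bound:
  assumes J: "finite J"
    and psd: "\<And>x. 0 \<le> Re (cinner n x (mulv n M x))"
    and eq: "\<And>k i. k \<in> J \<Longrightarrow> i < n \<Longrightarrow> mulv n M (d k) i + of_real (\<sigma> k) * d k i = f k i"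
    and \<sigma>0: "0 < \<sigma>0" "\<And>k. k \<in> J \<Longrightarrow> \<sigma>0 \<le> \<sigma> k"
    and f: "\<And>g. vnorm n (lincomb J g f) \<le> c * coeff_norm J g"
  shows "vnorm n (lincomb J g d) \<le> c / \<sigma>0 * coeff_norm J g"
proof (cases "J = {}")
  case True
  then show ?thesis
    by (simp add: lincomb_def vnorm_def)
next
  case False
  obtain y where y: "(\<Sum>k\<in>J. (cmod (y k))\<^sup>2) = 1"
    and max: "\<And>g. vnorm n (lincomb J g d) \<le> vnorm n (lincomb J y d) * coeff_norm J g"
    using lincomb_norm_attains_max[OF J False] by blast
  define x where "x = lincomb J y d"
  define s where "s = vnorm n x"
  have s: "0 \<le> s"
    by (simp add: s_def vnorm_nonneg)
  have c: "0 \<le> c"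
    using f[of y] vnorm_nonneg[of n "lincomb J y f"] by (simp add: y)
  have "s\<^sup>2 * \<sigma>0 = s\<^sup>2 * (\<Sum>k\<in>J. \<sigma>0 * (cmod (y k))\<^sup>2)"
    by (simp add: y flip: sum_distrib_left)
  also have "\<dots> \<le> s\<^sup>2 * (\<Sum>k\<in>J. \<sigma> k * (cmod (y k))\<^sup>2)"
    using \<sigma>0(2) by (intro mult_left_mono sum_mono mult_right_mono) auto
  also have "\<dots> = s\<^sup>2 * Re (\<Sum>k\<in>J. cnj (y k) * (of_real (\<sigma> k) * y k))"
    by (simp only: cmod_power2) (simp add: Re_sum power2_eq_square algebra_simps)
  also have "\<dots> = Re (cinner n x (lincomb J (\<lambda>k. of_real (\<sigma> k) * y k) d))"
    unfolding x_def s_def by (rule lincomb_norm_max_stationary[OF max y refl, symmetric])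
  also have "\<dots> \<le> Re (cinner n x (mulv n M x)) + Re (cinner n x (lincomb J (\<lambda>k. of_real (\<sigma> k) * y k) d))"
    using psd[of x] by simp
  also have "\<dots> = Re (cinner n x (lincomb J y f))"
  proof -
    have "lincomb J y f i = mulv n M x i + lincomb J (\<lambda>k. of_real (\<sigma> k) * y k) d i" if "i < n" for i
    proof -
      have "lincomb J y f i = (\<Sum>k\<in>J. y k * (mulv n M (d k) i + of_real (\<sigma> k) * d k i))"
        using eq that by (simp add: lincomb_def)
      then show ?thesis
        by (simp only: x_def mulv_lincomb) (simp add: lincomb_def sum.distrib algebra_simps)
    qed
    then have "cinner n x (lincomb J y f)
        = cinner n x (\<lambda>i. mulv n M x i + lincomb J (\<lambda>k. of_real (\<sigma> k) * y k) d i)"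
      by (intro cinner_cong) auto
    then show ?thesis
      by (simp add: cinner_add_right)
  qed
  also have "\<dots> \<le> s * vnorm n (lincomb J y f)"
    using Re_cinner_le[of n x "lincomb J y f"] by (simp add: s_def)
  also have "\<dots> \<le> s * c"
    using f[of y] s by (simp add: y mult_left_mono)
  finally have "s * (s * \<sigma>0) \<le> s * c"
    by (simp add: power2_eq_square mult.assoc)
  then have "s \<le> c / \<sigma>0"
    using s c \<sigma>0(1) by (cases "s = 0") (auto simp: le_divide_eq mult.commute)
  have "vnorm n (lincomb J g d) \<le> s * coeff_norm J g"
    using max by (simp add: s_def x_def)
  also have "\<dots> \<le> c / \<sigma>0 * coeff_norm J g"
    by (rule mult_right_mono[OF \<open>s \<le> c / \<sigma>0\<close>]) (simp add: sum_nonneg)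
  finally show ?thesis .
qed

section \<open>Comparing maximisers over \<open>\<A>\<^sub>K\<^sup>n\<close>\<close>

lemma finite_AKn: "finite (AKn K n)"
proof -
  let ?E = "\<lambda>f::nat \<Rightarrow> complex. \<lambda>i. if i < n then f i else 0"
  have "roots_of_unity K = (\<lambda>k. cis (2 * pi * real k / real K)) ` {..<K}"
    by (auto simp: roots_of_unity_def)
  then have "finite (Pi\<^sub>E {..<n} (\<lambda>_. roots_of_unity K))"
    by (intro finite_PiE) auto
  moreover have "AKn K n \<subseteq> ?E ` (Pi\<^sub>E {..<n} (\<lambda>_. roots_of_unity K))"
  proof
    fix z assume z: "z \<in> AKn K n"
    then have "z = ?E (restrict z {..<n})" "restrict z {..<n} \<in> Pi\<^sub>E {..<n} (\<lambda>_. roots_of_unity K)"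
      by (auto simp: AKn_def fun_eq_iff)
    then show "z \<in> ?E ` (Pi\<^sub>E {..<n} (\<lambda>_. roots_of_unity K))"
      by blast
  qed
  ultimately show ?thesis
    by (meson finite_surj)
qed

lemma power2_vnorm_AKn:
  assumes "z \<in> AKn K n"
  shows "(vnorm n z)\<^sup>2 = real n"
proof -
  have "cmod (z i) = 1" if "i < n" for i
    using assms that by (auto simp: AKn_def roots_of_unity_def)
  then show ?thesis
    by (simp add: power2_vnorm)
qed

lemma Max_perturbation_le:
  fixes f g :: "'a \<Rightarrow> real"
  assumes S: "finite S" "x \<in> S"
    and close: "\<And>z. z \<in> S \<Longrightarrow> \<bar>f z - g z\<bar> \<le> \<epsilon>" and max: "\<And>z. z \<in> S \<Longrightarrow> g z \<le> g x"
  shows "\<bar>Max (f ` S) - f x\<bar> \<le> 2 * \<epsilon>"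
proof -
  have "Max (f ` S) \<in> f ` S"
    using S by (intro Max_in) auto
  then obtain z where z: "z \<in> S" "Max (f ` S) = f z"
    by blast
  moreover have "f x \<le> Max (f ` S)"
    using S by simp
  ultimately show ?thesis
    using close[of z] close[of x] max[of z] S(2) by linarith
qed

lemma delta_star_le: "delta_star lam r \<le> lam r"
  unfolding delta_star_def by (rule Min_le) auto

lemma error_factor_le:
  fixes h \<delta> lr l1 l2 s :: real
  assumes "0 \<le> h" "h \<le> \<delta> / 2" "\<delta> \<le> lr" "lr \<le> l1" "lr - h \<le> s" "0 \<le> l2" "0 < s"
  shows "(l1 + h) * (2 * h / s) + l2 + 2 * h \<le> 8 * (l2 + l1 / \<delta> * h)"
proof (cases "h = 0")
  case False
  then have h: "0 < h" and \<delta>: "0 < \<delta>"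
    using assms by auto
  have "2 * h / s \<le> 2 * h / (\<delta> / 2)"
    using assms h \<delta> by (intro divide_left_mono) auto
  then have "(l1 + h) * (2 * h / s) \<le> (3 / 2 * l1) * (4 * h / \<delta>)"
    using assms h \<delta> by (intro mult_mono) auto
  also have "\<dots> = 6 * (l1 / \<delta> * h)"
    by simp
  finally have "(l1 + h) * (2 * h / s) \<le> 6 * (l1 / \<delta> * h)" .
  moreover have "h \<le> l1 / \<delta> * h"
    using assms h \<delta> by (simp add: field_simps)
  moreover have "a + l2 + 2 * h \<le> 8 * (l2 + x)" if "a \<le> 6 * x" "h \<le> x" for a x
    using that assms(6) unfolding distrib_left by linarith
  ultimately show ?thesis
    by blast
qed (use assms in simp)

section \<open>A perturbed positive semidefinite matrix\<close>

locale perturbed_psd =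
  fixes n rs :: nat and lam :: "nat \<Rightarrow> real" and u H :: "nat \<Rightarrow> nat \<Rightarrow> complex"
    and \<sigma> :: "nat \<Rightarrow> real" and v w :: "nat \<Rightarrow> nat \<Rightarrow> complex"
  assumes rs_le: "rs \<le> n"
    and lam_pos: "\<forall>k\<in>{1..rs}. lam k > 0"
    and lam_mono: "\<forall>k\<in>{1..<rs}. lam (k+1) \<le> lam k"
    and lam_zero: "\<forall>k>rs. lam k = 0"
    and u_on: "orthonormal_on n {1..rs} u"
    and svd: "is_svd n (\<lambda>i j. eig_mat rs lam u i j + H i j) \<sigma> v w"
begin

abbreviation "M \<equiv> eig_mat rs lam u"
abbreviation "Q \<equiv> \<lambda>i j. eig_mat rs lam u i j + H i j"
abbreviation "h \<equiv> spec_norm n H"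

lemma lam_nonneg: "1 \<le> k \<Longrightarrow> 0 \<le> lam k"
  using lam_pos lam_zero by (cases "k \<le> rs") (auto simp: less_imp_le not_le)

lemma lam_antimono:
  assumes "1 \<le> k" "k \<le> l"
  shows "lam l \<le> lam k"
  using assms(2)
proof (induction l rule: dec_induct)
  case (step m)
  then have "lam (Suc m) \<le> lam m"
    using lam_mono lam_zero lam_nonneg[of m] assms(1) by (cases "m < rs") auto
  then show ?case
    using step.IH by linarith
qed simp

lemma v_on: "orthonormal_on n {1..n} v"
  and w_on: "orthonormal_on n {1..n} w"
  using svd by (simp_all add: is_svd_def)

lemma sigma_nonneg: "k \<in> {1..n} \<Longrightarrow> 0 \<le> \<sigma> k"
  using svd by (simp add: is_svd_def)

lemma sigma_antimono:
  assumes "1 \<le> k" "k \<le> l" "l \<le> n"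
  shows "\<sigma> l \<le> \<sigma> k"
  using assms(2,3)
proof (induction l rule: dec_induct)
  case (step m)
  then have "\<sigma> (m+1) \<le> \<sigma> m"
    using svd assms(1) by (simp add: is_svd_def)
  then show ?case
    using step by simp
qed simp

lemma h_nonneg: "0 < n \<Longrightarrow> 0 \<le> h"
  by (rule spec_norm_nonneg)

lemma M_psd: "0 \<le> Re (cinner n x (mulv n M x))"
proof -
  have "cinner n x (mulv n M x) = (\<Sum>k\<in>{1..rs}. of_real (lam k) * (cinner n (u k) x * cnj (cinner n (u k) x)))"
    by (simp add: mulv_eig_mat cinner_lincomb_right cinner_commute mult.assoc)
  then have "Re (cinner n x (mulv n M x)) = (\<Sum>k\<in>{1..rs}. lam k * (cmod (cinner n (u k) x))\<^sup>2)"
    by (simp add: cnj_mult_self mult.commute[of "cinner n (u _) x"] del: of_real_power)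
  also have "\<dots> \<ge> 0"
    using lam_nonneg by (intro sum_nonneg mult_nonneg_nonneg) auto
  finally show ?thesis .
qed

lemma mulv_Q: "mulv n Q x = (\<lambda>i. mulv n M x i + mulv n H x i)"
  by (rule mulv_add_mat)

lemma mulv_Q_adjoint: "mulv n (mat_adjoint Q) x = (\<lambda>i. mulv n M x i + mulv n (mat_adjoint H) x i)"
proof -
  have "mat_adjoint Q = (\<lambda>i j. mat_adjoint M i j + mat_adjoint H i j)"
    by (simp add: mat_adjoint_def fun_eq_iff)
  then show ?thesis
    by (simp add: mulv_add_mat mat_adjoint_eig_mat)
qed

text \<open>Weyl-type bounds \<open>\<lambda>\<^sub>k - \<parallel>H\<parallel> \<le> \<sigma>\<^sub>k \<le> \<lambda>\<^sub>k + \<parallel>H\<parallel>\<close>, via a test vector in the span of the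
  first \<open>k\<close> vectors of one family that is orthogonal to the first \<open>k - 1\<close> of the other.\<close>

lemma singular_value_le:
  assumes k: "k \<in> {1..n}"
  shows "\<sigma> k \<le> lam k + h"
proof -
  obtain c where x: "0 < vnorm n (lincomb {1..k} c w)"
    and orth: "\<And>i. i \<in> {1..<k} \<Longrightarrow> cinner n (u i) (lincomb {1..k} c w) = 0"
    using orthogonal_lincomb_exists[OF orthonormal_on_subset[OF w_on]] k by auto
  define x where "x = lincomb {1..k} c w"
  have "\<sigma> k * vnorm n x \<le> vnorm n (mulv n Q x)"
    unfolding vnorm_mulv_svd[OF svd] x_def using k
  proof (intro vnorm_weighted_lincomb_ge[OF w_on v_on])
    fix j assume "j \<in> {1..k}"
    then show "\<sigma> k \<le> cmod (of_real (\<sigma> j))"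
      using k sigma_antimono[of j k] by auto
  qed (use k sigma_nonneg in auto)
  also have "\<dots> \<le> vnorm n (mulv n M x) + h * vnorm n x"
    using vnorm_triangle[of n "mulv n M x" "mulv n H x"] vnorm_mulv_le[of n H x]
    by (simp add: mulv_Q)
  also have "vnorm n (mulv n M x) \<le> lam k * vnorm n x"
    unfolding mulv_eig_mat
  proof (rule vnorm_weighted_lincomb_le[OF u_on u_on])
    fix j assume j: "j \<in> {1..rs}" "cinner n (u j) x \<noteq> 0"
    then have "k \<le> j"
      using orth[of j] by (force simp: x_def)
    then show "cmod (of_real (lam j)) \<le> lam k"
      using j k lam_nonneg[of j] lam_antimono[of k j] by auto
  qed (use k lam_nonneg in auto)
  finally have "\<sigma> k * vnorm n x \<le> (lam k + h) * vnorm n x"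
    by (simp add: algebra_simps)
  then show ?thesis
    using x by (simp add: x_def)
qed

lemma singular_value_ge:
  assumes k: "k \<in> {1..rs}"
  shows "lam k - h \<le> \<sigma> k"
proof -
  have kn: "k \<in> {1..n}"
    using k rs_le by auto
  obtain c where x: "0 < vnorm n (lincomb {1..k} c u)"
    and orth: "\<And>i. i \<in> {1..<k} \<Longrightarrow> cinner n (v i) (lincomb {1..k} c u) = 0"
    using orthogonal_lincomb_exists[OF orthonormal_on_subset[OF u_on]] k by auto
  define x where "x = lincomb {1..k} c u"
  have "lam k * vnorm n x \<le> vnorm n (mulv n M x)"
    unfolding mulv_eig_mat x_def using k
  proof (intro vnorm_weighted_lincomb_ge[OF u_on u_on])
    fix j assume "j \<in> {1..k}"
    then show "lam k \<le> cmod (of_real (lam j))"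
      using k lam_antimono[of j k] by auto
  qed (use k lam_nonneg in auto)
  also have "\<dots> \<le> vnorm n (mulv n (mat_adjoint Q) x) + h * vnorm n x"
    using vnorm_rev_triangle[of n "mulv n M x" "mulv n (mat_adjoint H) x"]
      vnorm_mulv_adjoint_le[of n H x] kn
    by (simp add: mulv_Q_adjoint)
  also have "vnorm n (mulv n (mat_adjoint Q) x) \<le> \<sigma> k * vnorm n x"
    unfolding vnorm_mulv_svd[OF is_svd_adjoint[OF svd]]
  proof (rule vnorm_weighted_lincomb_le[OF v_on w_on])
    fix j assume j: "j \<in> {1..n}" "cinner n (v j) x \<noteq> 0"
    then have "k \<le> j"
      using orth[of j] by (force simp: x_def)
    then show "cmod (of_real (\<sigma> j)) \<le> \<sigma> k"
      using j k sigma_nonneg[of j] sigma_antimono[of k j] by auto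
  qed (use kn sigma_nonneg in auto)
  finally have "(lam k - h) * vnorm n x \<le> \<sigma> k * vnorm n x"
    by (simp add: algebra_simps)
  then show ?thesis
    using x by (simp add: x_def)
qed

text \<open>With \<open>Q w\<^sub>k = \<sigma>\<^sub>k v\<^sub>k\<close> and \<open>Q\<^sup>\<dagger> v\<^sub>k = \<sigma>\<^sub>k w\<^sub>k\<close>, the differences \<open>w\<^sub>k - v\<^sub>k\<close> solve a Sylvester
  equation whose right-hand side is of size \<open>\<parallel>H\<parallel>\<close>.\<close>

lemma singular_vectors_sylvester:
  assumes k: "k \<in> {1..n}" and i: "i < n"
  shows "mulv n M (\<lambda>i. w k i - v k i) i + of_real (\<sigma> k) * (w k i - v k i)
       = mulv n (mat_adjoint H) (v k) i - mulv n H (w k) i"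
proof -
  have w: "mulv n M (w k) i = of_real (\<sigma> k) * v k i - mulv n H (w k) i"
    using mulv_svd_right_vector[OF svd k i] by (simp add: mulv_Q eq_diff_eq)
  have v: "mulv n M (v k) i = of_real (\<sigma> k) * w k i - mulv n (mat_adjoint H) (v k) i"
    using mulv_svd_right_vector[OF is_svd_adjoint[OF svd] k i] by (simp add: mulv_Q_adjoint eq_diff_eq)
  show ?thesis
    unfolding mulv_diff w v by (simp add: algebra_simps)
qed

lemma vnorm_lincomb_singular_vector_diff_le:
  assumes r: "1 \<le> r" "r \<le> n" and \<sigma>r: "0 < \<sigma> r"
  shows "vnorm n (lincomb {1..r} g (\<lambda>k i. w k i - v k i)) \<le> 2 * h / \<sigma> r * coeff_norm {1..r} g"
proof -
  have n: "0 < n"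
    using r by simp
  have vJ: "orthonormal_on n {1..r} v" and wJ: "orthonormal_on n {1..r} w"
    using r orthonormal_on_subset[OF v_on] orthonormal_on_subset[OF w_on] by auto
  have f: "vnorm n (lincomb {1..r} g (\<lambda>k i. mulv n (mat_adjoint H) (v k) i - mulv n H (w k) i))
      \<le> 2 * h * coeff_norm {1..r} g" for g
  proof -
    have "lincomb {1..r} g (\<lambda>k i. mulv n (mat_adjoint H) (v k) i - mulv n H (w k) i)
        = (\<lambda>i. mulv n (mat_adjoint H) (lincomb {1..r} g v) i - mulv n H (lincomb {1..r} g w) i)"
      by (simp only: mulv_lincomb) (simp add: lincomb_def right_diff_distrib sum_subtractf)
    then have "vnorm n (lincomb {1..r} g (\<lambda>k i. mulv n (mat_adjoint H) (v k) i - mulv n H (w k) i))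
        \<le> vnorm n (mulv n (mat_adjoint H) (lincomb {1..r} g v)) + vnorm n (mulv n H (lincomb {1..r} g w))"
      by (simp only: vnorm_triangle_diff)
    also have "\<dots> \<le> h * vnorm n (lincomb {1..r} g v) + h * vnorm n (lincomb {1..r} g w)"
      by (intro add_mono vnorm_mulv_adjoint_le[OF n] vnorm_mulv_le)
    finally show ?thesis
      by (simp only: vnorm_lincomb[OF vJ finite_atLeastAtMost] vnorm_lincomb[OF wJ finite_atLeastAtMost])
  qed
  have eq: "mulv n M (\<lambda>i. w k i - v k i) i + of_real (\<sigma> k) * (w k i - v k i)
      = mulv n (mat_adjoint H) (v k) i - mulv n H (w k) i" if "k \<in> {1..r}" "i < n" for k i
    using that r by (intro singular_vectors_sylvester) auto
  have "\<sigma> r \<le> \<sigma> k" if "k \<in> {1..r}" for k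
    using that r by (intro sigma_antimono) auto
  then show ?thesis
    using sylvester_bound[OF _ M_psd eq \<sigma>r _ f] by simp
qed

lemma qform_eig_minus_trunc:
  assumes "r \<le> n"
  shows "qform n M z - qform n (trunc_mat r \<sigma> v) z
      = cinner n (lincomb {1..r} (\<lambda>k. of_real (\<sigma> k) * cinner n (v k) z) (\<lambda>k i. w k i - v k i)) z
      + cinner n z (lincomb {r+1..n} (\<lambda>k. of_real (\<sigma> k) * cinner n (w k) z) v)
      - cinner n z (mulv n H z)"
proof -
  let ?b = "\<lambda>k. of_real (\<sigma> k) * cinner n (w k) z"
  have "{1..n} = {1..r} \<union> {r+1..n}"
    using assms by auto
  then have split: "lincomb {1..n} ?b v = (\<lambda>i. lincomb {1..r} ?b v i + lincomb {r+1..n} ?b v i)"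
    by (simp add: lincomb_def sum.union_disjoint)
  have "qform n M z = cinner n z (mulv n Q z) - cinner n z (mulv n H z)"
    by (simp add: qform_eq_cinner mulv_Q cinner_add_right)
  also have "cinner n z (mulv n Q z) = cinner n z (lincomb {1..r} ?b v) + cinner n z (lincomb {r+1..n} ?b v)"
    by (simp only: cinner_mulv_svd[OF svd] split cinner_add_right)
  also have "cinner n z (lincomb {1..r} ?b v) = qform n (trunc_mat r \<sigma> v) z
      + cinner n (lincomb {1..r} (\<lambda>k. of_real (\<sigma> k) * cinner n (v k) z) (\<lambda>k i. w k i - v k i)) z"
    by (simp add: qform_eq_cinner trunc_mat_eq_eig_mat mulv_eig_mat cinner_lincomb_right
        cinner_lincomb_left cinner_diff_left cinner_commute algebra_simps flip: sum.distrib)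
  finally show ?thesis
    by simp
qed

lemma cmod_qform_eig_minus_trunc_le:
  assumes r: "1 \<le> r" "r \<le> n" and \<sigma>r: "0 < \<sigma> r"
  shows "cmod (qform n M z - qform n (trunc_mat r \<sigma> v) z)
      \<le> ((lam 1 + h) * (2 * h / \<sigma> r) + lam (r+1) + 2 * h) * (vnorm n z)\<^sup>2"
proof -
  let ?g = "\<lambda>k. of_real (\<sigma> k) * cinner n (v k) z"
  let ?X = "cinner n (lincomb {1..r} ?g (\<lambda>k i. w k i - v k i)) z"
  let ?Y = "cinner n z (lincomb {r+1..n} (\<lambda>k. of_real (\<sigma> k) * cinner n (w k) z) v)"
  let ?Z = "cinner n z (mulv n H z)"
  have h: "0 \<le> h"
    using r h_nonneg by simp
  have vJ: "orthonormal_on n {1..r} v"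
    using r orthonormal_on_subset[OF v_on] by auto
  have "coeff_norm {1..r} ?g = vnorm n (lincomb {1..r} ?g v)"
    by (rule vnorm_lincomb[OF vJ, symmetric]) simp
  also have "\<dots> \<le> (lam 1 + h) * vnorm n z"
  proof (rule vnorm_weighted_lincomb_le[OF vJ vJ])
    fix k assume k: "k \<in> {1..r}"
    then have "\<sigma> k \<le> lam 1 + h"
      using r singular_value_le[of k] lam_antimono[of 1 k] by auto
    then show "cmod (of_real (\<sigma> k)) \<le> lam 1 + h"
      using k r sigma_nonneg[of k] by auto
  qed (use h lam_nonneg[of 1] in auto)
  finally have g: "coeff_norm {1..r} ?g \<le> (lam 1 + h) * vnorm n z" .
  have "cmod ?X \<le> vnorm n (lincomb {1..r} ?g (\<lambda>k i. w k i - v k i)) * vnorm n z"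
    by (rule cmod_cinner_le)
  also have "\<dots> \<le> 2 * h / \<sigma> r * ((lam 1 + h) * vnorm n z) * vnorm n z"
    using vnorm_lincomb_singular_vector_diff_le[OF r \<sigma>r, of ?g] g h \<sigma>r
    by (intro mult_right_mono vnorm_nonneg) (meson divide_nonneg_pos mult_left_mono order_trans
        zero_le_mult_iff zero_le_numeral less_imp_le)
  finally have X: "cmod ?X \<le> (lam 1 + h) * (2 * h / \<sigma> r) * (vnorm n z)\<^sup>2"
    by (simp add: power2_eq_square mult_ac)
  have tail: "vnorm n (lincomb {r+1..n} (\<lambda>k. of_real (\<sigma> k) * cinner n (w k) z) v)
      \<le> (lam (r+1) + h) * vnorm n z"
  proof (rule vnorm_weighted_lincomb_le)
    fix k assume k: "k \<in> {r+1..n}"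
    then have "\<sigma> k \<le> lam (r+1) + h"
      using sigma_antimono[of "r+1" k] singular_value_le[of "r+1"] by auto
    then show "cmod (of_real (\<sigma> k)) \<le> lam (r+1) + h"
      using k sigma_nonneg[of k] r by auto
  qed (use orthonormal_on_subset[OF v_on] orthonormal_on_subset[OF w_on] h lam_nonneg[of "r+1"] in auto)
  have "cmod ?Y \<le> vnorm n z * vnorm n (lincomb {r+1..n} (\<lambda>k. of_real (\<sigma> k) * cinner n (w k) z) v)"
    by (rule cmod_cinner_le)
  also have "\<dots> \<le> vnorm n z * ((lam (r+1) + h) * vnorm n z)"
    by (rule mult_left_mono[OF tail vnorm_nonneg])
  finally have Y: "cmod ?Y \<le> (lam (r+1) + h) * (vnorm n z)\<^sup>2"
    by (simp add: power2_eq_square mult_ac)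
  have "cmod ?Z \<le> vnorm n z * vnorm n (mulv n H z)"
    by (rule cmod_cinner_le)
  also have "\<dots> \<le> vnorm n z * (h * vnorm n z)"
    by (rule mult_left_mono[OF vnorm_mulv_le vnorm_nonneg])
  finally have Z: "cmod ?Z \<le> h * (vnorm n z)\<^sup>2"
    by (simp add: power2_eq_square mult_ac)
  have "cmod (?X + ?Y - ?Z) \<le> cmod ?X + cmod ?Y + cmod ?Z"
    using norm_triangle_ineq4[of "?X + ?Y" ?Z] norm_triangle_ineq[of ?X ?Y] by linarith
  then show ?thesis
    unfolding qform_eig_minus_trunc[OF r(2)] using X Y Z by (simp add: algebra_simps)
qed

lemma OPT_gap_le:
  assumes zr: "zr \<in> AKn K n"
    and opt: "\<forall>z\<in>AKn K n. Re (qform n (trunc_mat r \<sigma> v) z) \<le> Re (qform n (trunc_mat r \<sigma> v) zr)"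
    and r: "1 \<le> r" "r \<le> rs" and small: "h \<le> delta_star lam r / 2"
  shows "\<bar>OPT K n M - Re (qform n M zr)\<bar> \<le> 16 * (real n * (lam (r+1) + lam 1 / delta_star lam r * h))"
proof -
  have h: "0 \<le> h"
    using r rs_le h_nonneg by simp
  have "lam r - h \<le> \<sigma> r"
    using r by (intro singular_value_ge) auto
  moreover have "0 < lam r" "lam r \<le> lam 1"
    using r lam_pos lam_antimono[of 1 r] by auto
  moreover note delta_star_le[of lam r]
  ultimately have \<sigma>r: "0 < \<sigma> r"
    using small by linarith
  define E where "E = (lam 1 + h) * (2 * h / \<sigma> r) + lam (r+1) + 2 * h"
  have "\<bar>Re (qform n M z) - Re (qform n (trunc_mat r \<sigma> v) z)\<bar> \<le> E * real n" if "z \<in> AKn K n" for z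
  proof -
    have "\<bar>Re (qform n M z) - Re (qform n (trunc_mat r \<sigma> v) z)\<bar>
        \<le> cmod (qform n M z - qform n (trunc_mat r \<sigma> v) z)"
      using abs_Re_le_cmod[of "qform n M z - qform n (trunc_mat r \<sigma> v) z"] by simp
    also have "\<dots> \<le> E * real n"
      using cmod_qform_eig_minus_trunc_le[OF r(1) _ \<sigma>r, of z] r rs_le
      unfolding E_def power2_vnorm_AKn[OF that] by simp
    finally show ?thesis .
  qed
  then have "\<bar>OPT K n M - Re (qform n M zr)\<bar> \<le> 2 * (E * real n)"
    unfolding OPT_def using opt
    by (intro Max_perturbation_le[OF finite_AKn zr, where g = "\<lambda>z. Re (qform n (trunc_mat r \<sigma> v) z)"]) auto
  also have "\<dots> \<le> 16 * (real n * (lam (r+1) + lam 1 / delta_star lam r * h))"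
  proof -
    define X where "X = lam (r+1) + lam 1 / delta_star lam r * h"
    have "E \<le> 8 * X"
      unfolding E_def X_def
      by (rule error_factor_le[OF h small delta_star_le \<open>lam r \<le> lam 1\<close> \<open>lam r - h \<le> \<sigma> r\<close>
            lam_nonneg \<sigma>r]) simp
    then have "2 * (E * real n) \<le> 16 * (real n * X)"
      using mult_right_mono[of E "8 * X" "real n"] by simp
    then show ?thesis
      by (simp only: X_def)
  qed
  finally show ?thesis .
qed

end

theorem theorem3:
  shows "\<exists>C::real. \<forall>(n::nat) (K::nat) (rs::nat) (r::nat) (lam::nat \<Rightarrow> real)
            (u::nat \<Rightarrow> nat \<Rightarrow> complex) (H::nat \<Rightarrow> nat \<Rightarrow> complex)
            (\<sigma>::nat \<Rightarrow> real) (v::nat \<Rightarrow> nat \<Rightarrow> complex) (w::nat \<Rightarrow> nat \<Rightarrow> complex)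
            (zr::nat \<Rightarrow> complex).
     K \<ge> 2 \<and> rs \<le> n \<and>
     (\<forall>k\<in>{1..rs}. lam k > 0) \<and> (\<forall>k\<in>{1..<rs}. lam (k+1) \<le> lam k) \<and>
     (\<forall>k>rs. lam k = 0) \<and> orthonormal_on n {1..rs} u \<and>
     is_svd n (\<lambda>i j. eig_mat rs lam u i j + H i j) \<sigma> v w \<and>
     zr \<in> AKn K n \<and>
     (\<forall>z\<in>AKn K n. Re (qform n (trunc_mat r \<sigma> v) z) \<le> Re (qform n (trunc_mat r \<sigma> v) zr)) \<and>
     1 \<le> r \<and> r \<le> rs \<and>
     spec_norm n H \<le> delta_star lam r / 2
     \<longrightarrow>
     \<bar>OPT K n (eig_mat rs lam u) - Re (qform n (eig_mat rs lam u) zr)\<bar>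
       \<le> C * (real n * (lam (r+1) + lam 1 / delta_star lam r * spec_norm n H))"
  by (intro exI[of _ 16] allI impI, elim conjE, rule perturbed_psd.OPT_gap_le)
    (simp_all add: perturbed_psd_def)

end
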